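(* Let $G$ be a finite connected graph with at least one edge and $\Delta$ a decision tree for $G$. Then the set of subsets of $E(G)$ is the disjoint union of subgraph intervals indexed by the spanning trees: $$2^{E(G)}=\bigsqcup_{T\text{ spanning tree of }G}\bigl[T\setminus\mathcal J(T),\ T\cup\mathcal E(T)\bigr],$$ where $\mathcal J(T)$ and $\mathcal E(T)$ are the sets of $\Delta$-active edges of $T$ belonging to $T$ and not belonging to $T$ respectively.
   Context: Graphs may have loops and multiple edges; spanning subgraphs are identified with edge subsets, and for $A\subseteq B\subseteq E(G)$ the interval $[A,B]$ is $\{S:A\subseteq S\subseteq B\}$. An isthmus is an edge whose deletion increases the number of components; an edge is standard if neither a loop nor an isthmus. Let $m=|E(G)|$. A decision tree is a perfect binary tree of depth $m-1$ whose nodes are labelled by edges of $G$ so that along every root-to-leaf path the labels form a permutation of $E(G)$. Given $S\subseteq E(G)$, run: $H:=G$, $n:=$ root; for $k=1,\dots,m$: let $e$ be the label of $n$; if $e$ is a loop of $H$: type L, delete $e$, go to left child; if $e$ is an isthmus of $H$: type I, contract $e$, go to right child; if $e$ is standard and $e\notin S$: type $S_e$, delete, go left; if standard and $e\in S$: type $S_i$, contract, go right. An edge is $\Delta$-active for $S$ if its type is L or I. *)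

theory Defs
  imports Main
begin

text \<open>A finite multigraph (loops and multiple edges allowed) is given by a vertex set V,
an edge set E and an incidence map inc assigning to each edge its pair of endpoints.
Spanning subgraphs are identified with edge subsets.\<close>

definition adj :: "('e \<Rightarrow> 'v \<times> 'v) \<Rightarrow> 'e set \<Rightarrow> ('v \<times> 'v) set" where
  "adj inc Es = {(x, y). \<exists>e\<in>Es. inc e = (x, y) \<or> inc e = (y, x)}"

definition components :: "'v set \<Rightarrow> ('e \<Rightarrow> 'v \<times> 'v) \<Rightarrow> 'e set \<Rightarrow> 'v set set" where
  "components V inc Es = {(adj inc Es)\<^sup>* `` {x} \<inter> V | x. x \<in> V}"

definition is_graph :: "'v set \<Rightarrow> ('e \<Rightarrow> 'v \<times> 'v) \<Rightarrow> 'e set \<Rightarrow> bool" where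
  "is_graph V inc Es \<longleftrightarrow> finite V \<and> finite Es \<and> (\<forall>e\<in>Es. fst (inc e) \<in> V \<and> snd (inc e) \<in> V)"

definition connected_graph :: "'v set \<Rightarrow> ('e \<Rightarrow> 'v \<times> 'v) \<Rightarrow> 'e set \<Rightarrow> bool" where
  "connected_graph V inc Es \<longleftrightarrow> V \<noteq> {} \<and> (\<forall>x\<in>V. \<forall>y\<in>V. (x, y) \<in> (adj inc Es)\<^sup>*)"

definition is_loop :: "('e \<Rightarrow> 'v \<times> 'v) \<Rightarrow> 'e set \<Rightarrow> 'e \<Rightarrow> bool" where
  "is_loop inc Es e \<longleftrightarrow> e \<in> Es \<and> fst (inc e) = snd (inc e)"

definition is_isthmus :: "'v set \<Rightarrow> ('e \<Rightarrow> 'v \<times> 'v) \<Rightarrow> 'e set \<Rightarrow> 'e \<Rightarrow> bool" where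
  "is_isthmus V inc Es e \<longleftrightarrow> e \<in> Es \<and>
     card (components V inc (Es - {e})) > card (components V inc Es)"

text \<open>Acyclic: no edge (including loops) lies on a cycle, i.e. no edge has its endpoints
joined by a walk avoiding it.\<close>
definition acyclic_edges :: "('e \<Rightarrow> 'v \<times> 'v) \<Rightarrow> 'e set \<Rightarrow> bool" where
  "acyclic_edges inc T \<longleftrightarrow> (\<forall>e\<in>T. inc e \<notin> (adj inc (T - {e}))\<^sup>*)"

definition spanning_tree :: "'v set \<Rightarrow> ('e \<Rightarrow> 'v \<times> 'v) \<Rightarrow> 'e set \<Rightarrow> 'e set \<Rightarrow> bool" where
  "spanning_tree V inc E T \<longleftrightarrow> T \<subseteq> E \<and> connected_graph V inc T \<and> acyclic_edges inc T"

definition contract_inc :: "('e \<Rightarrow> 'v \<times> 'v) \<Rightarrow> 'e \<Rightarrow> ('e \<Rightarrow> 'v \<times> 'v)" where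
  "contract_inc inc e = (let (u, w) = inc e; \<sigma> = (\<lambda>x. if x = w then u else x)
                          in (\<lambda>f. (\<sigma> (fst (inc f)), \<sigma> (snd (inc f)))))"

definition contract_V :: "'v set \<Rightarrow> ('e \<Rightarrow> 'v \<times> 'v) \<Rightarrow> 'e \<Rightarrow> 'v set" where
  "contract_V V inc e = (let (u, w) = inc e in (\<lambda>x. if x = w then u else x) ` V)"

text \<open>A decision tree of depth m-1 is encoded by a labelling of nodes, nodes being addressed
by their path from the root (False = left child, True = right child).\<close>
definition decision_tree :: "'e set \<Rightarrow> (bool list \<Rightarrow> 'e) \<Rightarrow> bool" where
  "decision_tree E lab \<longleftrightarrow> (\<forall>p. length p = card E - 1 \<longrightarrow>
      distinct (map (\<lambda>k. lab (take k p)) [0..<card E]) \<and>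
      set (map (\<lambda>k. lab (take k p)) [0..<card E]) = E)"

datatype etype = TL | TI | TSe | TSi

fun run :: "nat \<Rightarrow> 'v set \<Rightarrow> ('e \<Rightarrow> 'v \<times> 'v) \<Rightarrow> 'e set \<Rightarrow> (bool list \<Rightarrow> 'e) \<Rightarrow> 'e set
             \<Rightarrow> bool list \<Rightarrow> ('e \<times> etype) list" where
  "run 0 V inc Es lab S p = []"
| "run (Suc n) V inc Es lab S p =
     (let e = lab p in
      if is_loop inc Es e then (e, TL) # run n V inc (Es - {e}) lab S (p @ [False])
      else if is_isthmus V inc Es e then
        (e, TI) # run n (contract_V V inc e) (contract_inc inc e) (Es - {e}) lab S (p @ [True])
      else if e \<notin> S then (e, TSe) # run n V inc (Es - {e}) lab S (p @ [False])
      else (e, TSi) # run n (contract_V V inc e) (contract_inc inc e) (Es - {e}) lab S (p @ [True]))"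

definition active :: "'v set \<Rightarrow> ('e \<Rightarrow> 'v \<times> 'v) \<Rightarrow> 'e set \<Rightarrow> (bool list \<Rightarrow> 'e) \<Rightarrow> 'e set \<Rightarrow> 'e set" where
  "active V inc E lab S = {e. (e, TL) \<in> set (run (card E) V inc E lab S []) \<or>
                              (e, TI) \<in> set (run (card E) V inc E lab S [])}"

definition internally_active where
  "internally_active V inc E lab T = active V inc E lab T \<inter> T"

definition externally_active where
  "externally_active V inc E lab T = active V inc E lab T - T"

definition interval :: "'a set \<Rightarrow> 'a set \<Rightarrow> 'a set set" where
  "interval A B = {S. A \<subseteq> S \<and> S \<subseteq> B}"

end

theory Submission
  imports Defs
begin

(* Running the decision tree on S deletes the edges of type L and S_e and contracts those of
   type I and S_i. The contracted edges form a spanning tree T(S): deleting a loop or a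
   non-isthmus keeps the graph connected, and a spanning tree of G/e lifts to one of G by
   adding e when e is not a loop. The run sees S only through its standard edges, so two sets
   agreeing there have the same run; and the run on a spanning tree T contracts exactly T, since
   T contains every isthmus and no loop. Hence S lies in the interval of T(S), while S in the
   interval of T forces the run of S to be the run of T, so T = T(S). *)

definition identify :: "'v \<Rightarrow> 'v \<Rightarrow> 'v \<Rightarrow> 'v" where
  "identify u w x = (if x = w then u else x)"

lemma contract_inc_identify:
  "inc e = (u, w) \<Longrightarrow>
   contract_inc inc e f = (identify u w (fst (inc f)), identify u w (snd (inc f)))"
  by (simp add: contract_inc_def identify_def)

lemma contract_V_identify: "inc e = (u, w) \<Longrightarrow> contract_V V inc e = identify u w ` V"
  by (simp add: contract_V_def identify_def)

lemma finite_contract_V: "finite V \<Longrightarrow> finite (contract_V V inc e)"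
  by (simp add: contract_V_def split: prod.split)

lemma rtrancl_adj_mono: "F \<subseteq> G \<Longrightarrow> (adj inc F)\<^sup>* \<subseteq> (adj inc G)\<^sup>*"
  by (rule rtrancl_mono) (auto simp: adj_def)

lemma rtrancl_adj_sym: "(x, y) \<in> (adj inc F)\<^sup>* \<Longrightarrow> (y, x) \<in> (adj inc F)\<^sup>*"
proof -
  have "sym (adj inc F)" by (auto simp: sym_def adj_def)
  then show "(x, y) \<in> (adj inc F)\<^sup>* \<Longrightarrow> (y, x) \<in> (adj inc F)\<^sup>*"
    by (auto dest: symD sym_rtrancl)
qed

lemma rtrancl_adj_identify:
  assumes "inc e = (u, w)"
  shows "(z, identify u w z) \<in> (adj inc (insert e F))\<^sup>*"
    and "(identify u w z, z) \<in> (adj inc (insert e F))\<^sup>*"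
proof -
  have "(w, u) \<in> adj inc (insert e F)" "(u, w) \<in> adj inc (insert e F)"
    using assms by (auto simp: adj_def)
  then show "(z, identify u w z) \<in> (adj inc (insert e F))\<^sup>*"
    and "(identify u w z, z) \<in> (adj inc (insert e F))\<^sup>*"
    by (auto simp: identify_def)
qed

lemma rtrancl_adj_contract:
  assumes "inc e = (u, w)" and "(x, y) \<in> (adj inc (insert e F))\<^sup>*"
  shows "(identify u w x, identify u w y) \<in> (adj (contract_inc inc e) F)\<^sup>*"
  using assms(2)
proof (induction rule: rtrancl_induct)
  case base then show ?case by simp
next
  case (step y z)
  from step.hyps(2) obtain g where g: "g \<in> insert e F" "inc g = (y, z) \<or> inc g = (z, y)"
    by (auto simp: adj_def)
  have "(identify u w y, identify u w z) \<in> (adj (contract_inc inc e) F)\<^sup>*"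
  proof (cases "g = e")
    case True
    with g assms(1) show ?thesis by (auto simp: identify_def)
  next
    case False
    with g have "(identify u w y, identify u w z) \<in> adj (contract_inc inc e) F"
      by (force simp: adj_def contract_inc_identify[of inc e, OF assms(1)])
    then show ?thesis by simp
  qed
  with step.IH show ?case by (rule rtrancl_trans)
qed

lemma rtrancl_adj_uncontract:
  assumes "inc e = (u, w)" and "(x, y) \<in> (adj (contract_inc inc e) F)\<^sup>*"
  shows "(x, y) \<in> (adj inc (insert e F))\<^sup>*"
  using assms(2)
proof (induction rule: rtrancl_induct)
  case base then show ?case by simp
next
  case (step y z)
  let ?R = "(adj inc (insert e F))\<^sup>*"
  from step.hyps(2) obtain g where g: "g \<in> F"
    "contract_inc inc e g = (y, z) \<or> contract_inc inc e g = (z, y)"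
    by (auto simp: adj_def)
  obtain a b where ab: "inc g = (a, b)" by (cases "inc g")
  from g(1) ab have "(a, b) \<in> ?R" "(b, a) \<in> ?R"
    by (auto simp: adj_def)
  moreover note rtrancl_adj_identify[of inc e, OF assms(1)]
  ultimately have "(y, z) \<in> ?R"
    using g(2) ab by (auto simp: contract_inc_identify[of inc e, OF assms(1)]; meson rtrancl_trans)
  with step.IH show ?case by (rule rtrancl_trans)
qed

lemma rtrancl_adj_contract_iff:
  assumes "inc e = (u, w)"
  shows "(identify u w x, identify u w y) \<in> (adj (contract_inc inc e) F)\<^sup>* \<longleftrightarrow>
         (x, y) \<in> (adj inc (insert e F))\<^sup>*"
proof
  assume "(identify u w x, identify u w y) \<in> (adj (contract_inc inc e) F)\<^sup>*"
  then have "(identify u w x, identify u w y) \<in> (adj inc (insert e F))\<^sup>*"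
    by (rule rtrancl_adj_uncontract[of inc e, OF assms])
  moreover have "(x, identify u w x) \<in> (adj inc (insert e F))\<^sup>*"
    "(identify u w y, y) \<in> (adj inc (insert e F))\<^sup>*"
    using rtrancl_adj_identify[of inc e, OF assms] by blast+
  ultimately show "(x, y) \<in> (adj inc (insert e F))\<^sup>*"
    by (meson rtrancl_trans)
qed (rule rtrancl_adj_contract[of inc e, OF assms])

lemma rtrancl_adj_insert_cases:
  assumes "inc f = (a, b)" and "(x, y) \<in> (adj inc (insert f F))\<^sup>*"
  shows "(x, y) \<in> (adj inc F)\<^sup>* \<or> ((x, a) \<in> (adj inc F)\<^sup>* \<and> (b, y) \<in> (adj inc F)\<^sup>*)
     \<or> ((x, b) \<in> (adj inc F)\<^sup>* \<and> (a, y) \<in> (adj inc F)\<^sup>*)"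
  using assms(2)
proof (induction rule: rtrancl_induct)
  case base then show ?case by simp
next
  case (step y z)
  let ?R = "(adj inc F)\<^sup>*"
  from step.hyps(2) obtain g where g: "g \<in> insert f F" "inc g = (y, z) \<or> inc g = (z, y)"
    by (auto simp: adj_def)
  show ?case
  proof (cases "g = f")
    case False
    with g have "(y, z) \<in> ?R" by (auto simp: adj_def)
    with step.IH show ?thesis by (meson rtrancl_trans)
  next
    case True
    with g assms(1) have "(y = a \<and> z = b) \<or> (y = b \<and> z = a)" by auto
    with step.IH show ?thesis by (blast dest: rtrancl_adj_sym intro: rtrancl_trans)
  qed
qed

lemma not_acyclic_contract_if_rtrancl:
  assumes "finite F" and "inc e = (u, w)" and "u \<noteq> w" and "(u, w) \<in> (adj inc F)\<^sup>*"
  shows "\<not> acyclic_edges (contract_inc inc e) F"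
  using assms(1,4)
proof (induction F rule: finite_induct)
  case empty
  with assms(3) show ?case by (simp add: adj_def)
next
  case (insert f F)
  let ?inc' = "contract_inc inc e"
  show ?case
  proof (cases "(u, w) \<in> (adj inc F)\<^sup>*")
    case True
    have "(adj ?inc' (F - {g}))\<^sup>* \<subseteq> (adj ?inc' (insert f F - {g}))\<^sup>*" for g
      by (rule rtrancl_adj_mono) blast
    with insert.IH[OF True] show ?thesis by (auto simp: acyclic_edges_def)
  next
    case False
    obtain a b where ab: "inc f = (a, b)" by (cases "inc f")
    let ?R = "(adj inc F)\<^sup>*"
    let ?Re = "(adj inc (insert e F))\<^sup>*"
    \<comment> \<open>every u-w walk uses f, so contracting e = uw closes f into a cycle\<close>
    have "((u, a) \<in> ?R \<and> (b, w) \<in> ?R) \<or> ((u, b) \<in> ?R \<and> (a, w) \<in> ?R)"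
      using rtrancl_adj_insert_cases[OF ab insert.prems] False by blast
    moreover have "?R \<subseteq> ?Re" by (rule rtrancl_adj_mono) blast
    moreover have "(u, w) \<in> ?Re" "(w, u) \<in> ?Re"
      using assms(2) by (auto simp: adj_def)
    ultimately have "(a, b) \<in> ?Re"
      by (blast dest: rtrancl_adj_sym intro: rtrancl_trans)
    then have "?inc' f \<in> (adj ?inc' F)\<^sup>*"
      using ab by (simp add: rtrancl_adj_contract[of inc e, OF assms(2)]
          contract_inc_identify[of inc e, OF assms(2)])
    moreover have "insert f F - {f} = F" using insert.hyps(2) by blast
    ultimately show ?thesis by (auto simp: acyclic_edges_def)
  qed
qed

lemma connected_graph_mono:
  "connected_graph V inc F \<Longrightarrow> F \<subseteq> G \<Longrightarrow> connected_graph V inc G"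
  unfolding connected_graph_def using rtrancl_adj_mono by blast

lemma connected_graph_contract:
  assumes "connected_graph V inc F" and "e \<in> F"
  shows "connected_graph (contract_V V inc e) (contract_inc inc e) (F - {e})"
proof -
  obtain u w where uw: "inc e = (u, w)" by (cases "inc e")
  have "insert e (F - {e}) = F" using assms(2) by blast
  with assms(1) show ?thesis
    by (auto simp: connected_graph_def contract_V_identify[of inc e, OF uw]
        rtrancl_adj_contract_iff[of inc e, OF uw])
qed

lemma connected_graph_uncontract:
  assumes "connected_graph (contract_V V inc e) (contract_inc inc e) F"
  shows "connected_graph V inc (insert e F)"
proof -
  obtain u w where uw: "inc e = (u, w)" by (cases "inc e")
  from assms show ?thesis
    by (auto simp: connected_graph_def contract_V_identify[of inc e, OF uw]
        rtrancl_adj_contract_iff[of inc e, OF uw, symmetric])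
qed

lemma acyclic_edges_contract:
  assumes "acyclic_edges inc T" and "e \<in> T"
  shows "acyclic_edges (contract_inc inc e) (T - {e})"
proof -
  obtain u w where uw: "inc e = (u, w)" by (cases "inc e")
  have "insert e (T - {e} - {f}) = T - {f}" if "f \<in> T - {e}" for f
    using that assms(2) by blast
  with assms(1) show ?thesis
    by (auto simp: acyclic_edges_def contract_inc_identify[of inc e, OF uw]
        rtrancl_adj_contract_iff[of inc e, OF uw])
qed

lemma acyclic_edges_uncontract:
  assumes "acyclic_edges (contract_inc inc e) T" and "finite T" and "e \<notin> T"
    and "fst (inc e) \<noteq> snd (inc e)"
  shows "acyclic_edges inc (insert e T)"
proof -
  obtain u w where uw: "inc e = (u, w)" by (cases "inc e")
  have "inc e \<notin> (adj inc T)\<^sup>*"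
    using not_acyclic_contract_if_rtrancl[of T inc e, OF assms(2) uw] assms(1,4) uw by auto
  moreover have "inc f \<notin> (adj inc (insert e (T - {f})))\<^sup>*" if "f \<in> T" for f
    using assms(1) that
    by (auto simp: acyclic_edges_def contract_inc_identify[of inc e, OF uw]
        rtrancl_adj_contract_iff[of inc e, OF uw])
  moreover have "insert e T - {f} = insert e (T - {f})" if "f \<in> T" for f
    using that assms(3) by blast
  ultimately show ?thesis
    using assms(3) by (auto simp: acyclic_edges_def)
qed

lemma spanning_tree_contract:
  assumes "spanning_tree V inc Es T" and "e \<in> T"
  shows "spanning_tree (contract_V V inc e) (contract_inc inc e) (Es - {e}) (T - {e})"
  using assms connected_graph_contract acyclic_edges_contract
  by (auto simp: spanning_tree_def)

lemma spanning_tree_uncontract: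
  assumes "spanning_tree (contract_V V inc e) (contract_inc inc e) (Es - {e}) T"
    and "e \<in> Es" and "\<not> is_loop inc Es e" and "finite Es"
  shows "spanning_tree V inc Es (insert e T)"
proof -
  have T: "T \<subseteq> Es - {e}" "connected_graph (contract_V V inc e) (contract_inc inc e) T"
    "acyclic_edges (contract_inc inc e) T"
    using assms(1) by (auto simp: spanning_tree_def)
  then have "finite T" using assms(4) finite_subset by blast
  moreover have "fst (inc e) \<noteq> snd (inc e)" using assms(2,3) by (simp add: is_loop_def)
  ultimately show ?thesis
    using T assms(2) connected_graph_uncontract[OF T(2)]
      acyclic_edges_uncontract[OF T(3)] by (auto simp: spanning_tree_def)
qed

lemma spanning_tree_edges_mono:
  "spanning_tree V inc Es T \<Longrightarrow> T \<subseteq> Es' \<Longrightarrow> spanning_tree V inc Es' T"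
  by (simp add: spanning_tree_def)

lemma loop_notin_spanning_tree: "spanning_tree V inc Es T \<Longrightarrow> is_loop inc Es e \<Longrightarrow> e \<notin> T"
  unfolding spanning_tree_def acyclic_edges_def is_loop_def
  by (metis prod.collapse rtrancl.rtrancl_refl)

lemma components_connected: "connected_graph V inc F \<Longrightarrow> components V inc F = {V}"
  unfolding connected_graph_def components_def by blast

lemma not_isthmus_if_notin_spanning_tree:
  assumes "spanning_tree V inc Es T" and "e \<notin> T"
  shows "\<not> is_isthmus V inc Es e"
proof -
  from assms have "T \<subseteq> Es - {e}" "connected_graph V inc T" by (auto simp: spanning_tree_def)
  then have "connected_graph V inc (Es - {e})" "connected_graph V inc Es"
    using connected_graph_mono by blast+
  then show ?thesis by (simp add: is_isthmus_def components_connected)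
qed

lemma connected_graph_delete_non_isthmus:
  assumes "finite V" and "connected_graph V inc Es" and "e \<in> Es" and "\<not> is_isthmus V inc Es e"
  shows "connected_graph V inc (Es - {e})"
proof -
  let ?R = "(adj inc (Es - {e}))\<^sup>*"
  let ?C = "components V inc (Es - {e})"
  have V: "V \<noteq> {}" using assms(2) by (simp add: connected_graph_def)
  have C_eq: "?C = (\<lambda>x. ?R `` {x} \<inter> V) ` V"
    unfolding components_def by auto
  have "card ?C \<le> 1" using assms by (simp add: is_isthmus_def components_connected)
  moreover have "?C \<noteq> {}" "finite ?C" using V assms(1) by (simp_all add: C_eq)
  ultimately have "card ?C = 1" by (simp add: card_gt_0_iff Suc_le_eq antisym)
  then obtain C where C: "?C = {C}" by (rule card_1_singletonE)
  show ?thesis unfolding connected_graph_def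
  proof (intro conjI ballI)
    fix x y assume xy: "x \<in> V" "y \<in> V"
    then have "?R `` {x} \<inter> V \<in> ?C" "?R `` {y} \<inter> V \<in> ?C" by (simp_all add: C_eq)
    with C have "?R `` {x} \<inter> V = ?R `` {y} \<inter> V" by simp
    with xy show "(x, y) \<in> ?R" by blast
  qed (rule V)
qed

lemma connected_graph_delete_loop:
  assumes "connected_graph V inc Es" and "is_loop inc Es e"
  shows "connected_graph V inc (Es - {e})"
proof -
  have "adj inc Es \<subseteq> (adj inc (Es - {e}))\<^sup>="
    using assms(2) by (auto simp: adj_def is_loop_def)
  then have "(adj inc Es)\<^sup>* \<subseteq> (adj inc (Es - {e}))\<^sup>*"
    by (metis rtrancl_reflcl rtrancl_mono)
  with assms(1) show ?thesis unfolding connected_graph_def by blast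
qed

lemma decision_tree_root:
  assumes "decision_tree Es lab" and "finite Es" and "Es \<noteq> {}"
  shows "lab [] \<in> Es"
proof -
  let ?q = "replicate (card Es - 1) False"
  have "(\<lambda>k. lab (take k ?q)) ` {0..<card Es} = Es"
    using assms(1)[unfolded decision_tree_def, rule_format, of ?q] by simp
  moreover have "0 \<in> {0..<card Es}" using assms(2,3) by auto
  ultimately show ?thesis by (metis imageI take_0)
qed

lemma decision_tree_child:
  assumes "decision_tree Es lab" and "finite Es" and "Es \<noteq> {}"
  shows "decision_tree (Es - {lab []}) (\<lambda>q. lab (b # q))"
proof (cases "card Es = 1")
  case True
  then obtain x where "Es = {x}" by (rule card_1_singletonE)
  with decision_tree_root[OF assms] have "Es - {lab []} = {}" by simp
  then show ?thesis unfolding decision_tree_def by (simp only:) simp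
next
  case False
  with assms(2,3) obtain m where m: "card Es = Suc (Suc m)"
    by (metis card_0_eq not0_implies_Suc One_nat_def)
  have card: "card (Es - {lab []}) = Suc m"
    using decision_tree_root[OF assms] m assms(2) by simp
  show ?thesis unfolding decision_tree_def card
  proof (intro allI impI)
    fix q :: "bool list" assume "length q = Suc m - 1"
    define xs where "xs = map (\<lambda>k. lab (b # take k q)) [0..<Suc m]"
    \<comment> \<open>the paths below the child b are the paths b # q below the root\<close>
    have "map (\<lambda>k. lab (take k (b # q))) [0..<card Es] = lab [] # xs"
      unfolding m xs_def map_upt_Suc by simp
    moreover have "distinct (map (\<lambda>k. lab (take k (b # q))) [0..<card Es]) \<and>
        set (map (\<lambda>k. lab (take k (b # q))) [0..<card Es]) = Es"
      using assms(1) m \<open>length q = Suc m - 1\<close> unfolding decision_tree_def by simp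
    ultimately have "distinct (lab [] # xs) \<and> set (lab [] # xs) = Es" by simp
    then show "distinct xs \<and> set xs = Es - {lab []}" by auto
  qed
qed

lemma decision_subtree_step:
  assumes "Suc n = card Es" and "finite Es" and "decision_tree Es (\<lambda>q. lab (p @ q))"
  shows "lab p \<in> Es" and "n = card (Es - {lab p})" and "finite (Es - {lab p})"
    and "decision_tree (Es - {lab p}) (\<lambda>q. lab ((p @ [b]) @ q))"
proof -
  have "Es \<noteq> {}" using assms(1) by auto
  with assms(2,3) show root: "lab p \<in> Es"
    using decision_tree_root[of Es "\<lambda>q. lab (p @ q)"] by simp
  with assms(1,2) show "n = card (Es - {lab p})" "finite (Es - {lab p})" by simp_all
  from \<open>Es \<noteq> {}\<close> assms(2,3) show "decision_tree (Es - {lab p}) (\<lambda>q. lab ((p @ [b]) @ q))"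
    using decision_tree_child[of Es "\<lambda>q. lab (p @ q)" b] by simp
qed

lemma run_loop:
  "is_loop inc Es (lab p) \<Longrightarrow>
   run (Suc n) V inc Es lab S p = (lab p, TL) # run n V inc (Es - {lab p}) lab S (p @ [False])"
  by (simp add: Let_def)

lemma run_isthmus:
  "\<not> is_loop inc Es (lab p) \<Longrightarrow> is_isthmus V inc Es (lab p) \<Longrightarrow>
   run (Suc n) V inc Es lab S p = (lab p, TI) #
     run n (contract_V V inc (lab p)) (contract_inc inc (lab p)) (Es - {lab p}) lab S (p @ [True])"
  by (simp add: Let_def)

lemma run_contract:
  "\<not> is_loop inc Es (lab p) \<Longrightarrow> \<not> is_isthmus V inc Es (lab p) \<Longrightarrow> lab p \<in> S \<Longrightarrow>
   run (Suc n) V inc Es lab S p = (lab p, TSi) #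
     run n (contract_V V inc (lab p)) (contract_inc inc (lab p)) (Es - {lab p}) lab S (p @ [True])"
  by (simp add: Let_def)

lemma run_delete:
  "\<not> is_loop inc Es (lab p) \<Longrightarrow> \<not> is_isthmus V inc Es (lab p) \<Longrightarrow> lab p \<notin> S \<Longrightarrow>
   run (Suc n) V inc Es lab S p = (lab p, TSe) # run n V inc (Es - {lab p}) lab S (p @ [False])"
  by (simp add: Let_def)

declare run.simps(2) [simp del]

lemma run_step_cases:
  obtains (delete) "\<not> is_loop inc Es (lab p)" "\<not> is_isthmus V inc Es (lab p)" "lab p \<notin> S"
  | (contract) "\<not> is_loop inc Es (lab p)" "\<not> is_isthmus V inc Es (lab p)" "lab p \<in> S"
  | (isthmus) "\<not> is_loop inc Es (lab p)" "is_isthmus V inc Es (lab p)"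
  | (loop) "is_loop inc Es (lab p)"
  by blast

lemma run_edges:
  fixes V :: "'v set"
  assumes "n = card Es" and "finite Es" and "decision_tree Es (\<lambda>q. lab (p @ q))"
  shows "distinct (map fst (run n V inc Es lab S p)) \<and> fst ` set (run n V inc Es lab S p) = Es"
  using assms
proof (induction n arbitrary: V inc Es p)
  case (Suc n)
  note step = decision_subtree_step[OF Suc.prems]
  have IH: "distinct (map fst (run n V' inc' (Es - {lab p}) lab S (p @ [b]))) \<and>
      fst ` set (run n V' inc' (Es - {lab p}) lab S (p @ [b])) = Es - {lab p}"
    for V' :: "'v set" and inc' b
    using Suc.IH[OF step(2-4)] .
  from step(1) show ?case
    by (cases rule: run_step_cases[of inc Es lab p V S])
      (auto simp: run_loop run_isthmus run_contract run_delete IH)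
qed simp

lemma run_standard_types:
  "(e, TSe) \<in> set (run n V inc Es lab S p) \<Longrightarrow> e \<notin> S"
  "(e, TSi) \<in> set (run n V inc Es lab S p) \<Longrightarrow> e \<in> S"
  by (induction n arbitrary: V inc Es p) (auto simp: run.simps(2) Let_def split: if_splits)

lemma run_cong:
  assumes "\<And>e. (e, TSe) \<in> set (run n V inc Es lab S p) \<or> (e, TSi) \<in> set (run n V inc Es lab S p)
             \<Longrightarrow> e \<in> S \<longleftrightarrow> e \<in> S'"
  shows "run n V inc Es lab S p = run n V inc Es lab S' p"
  using assms
proof (induction n arbitrary: V inc Es p)
  case (Suc n)
  then show ?case
    by (cases rule: run_step_cases[of inc Es lab p V S])
      (auto simp: run_loop run_isthmus run_contract run_delete intro!: Suc.IH)
qed simp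

definition tree_of_run :: "('e \<times> etype) list \<Rightarrow> 'e set" where
  "tree_of_run r = {e. (e, TI) \<in> set r \<or> (e, TSi) \<in> set r}"

lemma tree_of_run_simps [simp]:
  "tree_of_run [] = {}"
  "tree_of_run ((e, TL) # r) = tree_of_run r"
  "tree_of_run ((e, TSe) # r) = tree_of_run r"
  "tree_of_run ((e, TI) # r) = insert e (tree_of_run r)"
  "tree_of_run ((e, TSi) # r) = insert e (tree_of_run r)"
  by (auto simp: tree_of_run_def)

lemma spanning_tree_tree_of_run:
  fixes V :: "'v set"
  assumes "n = card Es" and "finite Es" and "decision_tree Es (\<lambda>q. lab (p @ q))"
    and "finite V" and "connected_graph V inc Es"
  shows "spanning_tree V inc Es (tree_of_run (run n V inc Es lab S p))"
  using assms
proof (induction n arbitrary: V inc Es p)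
  case 0
  then show ?case by (simp add: spanning_tree_def acyclic_edges_def)
next
  case (Suc n)
  let ?e = "lab p"
  note step = decision_subtree_step[OF Suc.prems(1-3)]
  note root = step(1)
  have IH: "finite V' \<Longrightarrow> connected_graph V' inc' (Es - {?e}) \<Longrightarrow>
      spanning_tree V' inc' (Es - {?e}) (tree_of_run (run n V' inc' (Es - {?e}) lab S (p @ [b])))"
    for V' :: "'v set" and inc' b
    using Suc.IH[OF step(2-4)] .
  have deleted: "spanning_tree V inc Es (tree_of_run (run n V inc (Es - {?e}) lab S (p @ [b])))"
    if "connected_graph V inc (Es - {?e})" for b
    using IH[OF Suc.prems(4) that] spanning_tree_edges_mono by (auto simp: spanning_tree_def)
  have contracted: "spanning_tree V inc Es (insert ?e (tree_of_run
      (run n (contract_V V inc ?e) (contract_inc inc ?e) (Es - {?e}) lab S (p @ [True]))))"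
    if "\<not> is_loop inc Es ?e"
    using IH[OF finite_contract_V[OF Suc.prems(4)] connected_graph_contract[OF Suc.prems(5) root]]
    by (rule spanning_tree_uncontract[OF _ root that Suc.prems(2)])
  show ?case
  proof (cases rule: run_step_cases[of inc Es lab p V S])
    case delete
    with Suc.prems(4,5) root show ?thesis
      by (simp add: run_delete deleted connected_graph_delete_non_isthmus)
  next
    case contract
    then show ?thesis by (simp add: run_contract contracted)
  next
    case isthmus
    then show ?thesis by (simp add: run_isthmus contracted)
  next
    case loop
    with Suc.prems(5) show ?thesis by (simp add: run_loop deleted connected_graph_delete_loop)
  qed
qed

lemma tree_of_run_spanning_tree:
  fixes V :: "'v set"
  assumes "n = card Es" and "finite Es" and "decision_tree Es (\<lambda>q. lab (p @ q))"
    and "spanning_tree V inc Es (T \<inter> Es)"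
  shows "tree_of_run (run n V inc Es lab T p) = T \<inter> Es"
  using assms
proof (induction n arbitrary: V inc Es p)
  case 0
  then show ?case by simp
next
  case (Suc n)
  let ?e = "lab p"
  note step = decision_subtree_step[OF Suc.prems(1-3)]
  note root = step(1)
  have IH: "spanning_tree V' inc' (Es - {?e}) (T \<inter> (Es - {?e})) \<Longrightarrow>
      tree_of_run (run n V' inc' (Es - {?e}) lab T (p @ [b])) = T \<inter> (Es - {?e})"
    for V' :: "'v set" and inc' b
    using Suc.IH[OF step(2-4)] .
  have deleted: "tree_of_run (run n V inc (Es - {?e}) lab T (p @ [False])) = T \<inter> Es"
    if "?e \<notin> T"
  proof -
    from that have "T \<inter> (Es - {?e}) = T \<inter> Es" by blast
    moreover have "spanning_tree V inc (Es - {?e}) (T \<inter> Es)"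
      using that by (intro spanning_tree_edges_mono[OF Suc.prems(4)]) blast
    ultimately show ?thesis using IH[of V inc False] by simp
  qed
  have contracted: "tree_of_run (run n (contract_V V inc ?e) (contract_inc inc ?e)
      (Es - {?e}) lab T (p @ [True])) = T \<inter> (Es - {?e})"
    if "?e \<in> T"
  proof (rule IH)
    have "T \<inter> Es - {?e} = T \<inter> (Es - {?e})" by blast
    with spanning_tree_contract[OF Suc.prems(4), of ?e] that root
    show "spanning_tree (contract_V V inc ?e) (contract_inc inc ?e) (Es - {?e}) (T \<inter> (Es - {?e}))"
      by (simp only:) blast
  qed
  show ?case
  proof (cases rule: run_step_cases[of inc Es lab p V T])
    case delete
    then show ?thesis by (simp add: run_delete deleted)
  next
    case contract
    with root show ?thesis by (auto simp: run_contract contracted)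
  next
    case isthmus
    with Suc.prems(4) root have "?e \<in> T"
      using not_isthmus_if_notin_spanning_tree by fastforce
    with isthmus root show ?thesis by (auto simp: run_isthmus contracted)
  next
    case loop
    have "?e \<notin> T" using loop_notin_spanning_tree[OF Suc.prems(4) loop] root by blast
    with loop show ?thesis by (simp add: run_loop deleted)
  qed
qed

locale graph_with_decision_tree =
  fixes V :: "'v set" and inc :: "'e \<Rightarrow> 'v \<times> 'v" and E :: "'e set" and lab :: "bool list \<Rightarrow> 'e"
  assumes graph: "is_graph V inc E"
    and connected: "connected_graph V inc E"
    and decision_tree: "decision_tree E lab"
begin

abbreviation full_run :: "'e set \<Rightarrow> ('e \<times> etype) list" where
  "full_run S \<equiv> run (card E) V inc E lab S []"

definition tree_interval :: "'e set \<Rightarrow> 'e set set" where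
  "tree_interval T =
     interval (T - internally_active V inc E lab T) (T \<union> externally_active V inc E lab T)"

lemma mem_tree_interval_iff:
  "S \<in> tree_interval T \<longleftrightarrow> T - active V inc E lab T \<subseteq> S \<and> S \<subseteq> T \<union> active V inc E lab T"
  by (auto simp: tree_interval_def interval_def internally_active_def externally_active_def)

lemma finite_edges: "finite E"
  using graph by (simp add: is_graph_def)

lemma full_run_edges: "distinct (map fst (full_run S)) \<and> fst ` set (full_run S) = E"
  by (rule run_edges[OF refl finite_edges]) (simp add: decision_tree)

lemma full_run_type_unique:
  "(e, t) \<in> set (full_run S) \<Longrightarrow> (e, t') \<in> set (full_run S) \<longleftrightarrow> t' = t"
  using full_run_edges eq_key_imp_eq_value by metis

lemma full_run_type_exists: "e \<in> E \<Longrightarrow> \<exists>t. (e, t) \<in> set (full_run S)"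
  using full_run_edges by force

lemma active_subset_edges: "active V inc E lab S \<subseteq> E"
  using full_run_edges by (force simp: active_def)

lemma spanning_tree_tree_of_full_run: "spanning_tree V inc E (tree_of_run (full_run S))"
  using graph connected decision_tree
  by (intro spanning_tree_tree_of_run) (auto simp: is_graph_def)

lemma tree_of_full_run_spanning_tree:
  assumes "spanning_tree V inc E T"
  shows "tree_of_run (full_run T) = T"
proof -
  from assms have "T \<inter> E = T" by (auto simp: spanning_tree_def)
  with assms finite_edges decision_tree show ?thesis
    using tree_of_run_spanning_tree[of "card E" E lab "[]" V inc T] by simp
qed

lemma full_run_eq_if_mem_tree_interval:
  assumes "S \<in> tree_interval T"
  shows "full_run S = full_run T"
proof -
  have "e \<in> T \<longleftrightarrow> e \<in> S"
    if "(e, TSe) \<in> set (full_run T) \<or> (e, TSi) \<in> set (full_run T)" for e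
  proof -
    \<comment> \<open>a standard edge of the run is not active, so the interval pins it down\<close>
    from that have "e \<notin> active V inc E lab T"
      using full_run_type_unique by (fastforce simp: active_def)
    with assms show ?thesis by (auto simp: mem_tree_interval_iff)
  qed
  then show ?thesis by (metis run_cong)
qed

lemma mem_tree_interval_tree_of_full_run:
  assumes "S \<subseteq> E"
  shows "S \<in> tree_interval (tree_of_run (full_run S))"
proof -
  let ?T = "tree_of_run (full_run S)"
  let ?A = "active V inc E lab S"
  have "e \<in> S \<longleftrightarrow> e \<in> ?T"
    if "(e, TSe) \<in> set (full_run S) \<or> (e, TSi) \<in> set (full_run S)" for e
    using that
  proof
    assume deleted: "(e, TSe) \<in> set (full_run S)"
    then have "e \<notin> ?T" using full_run_type_unique[OF deleted] by (simp add: tree_of_run_def)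
    with run_standard_types(1)[OF deleted] show ?thesis by simp
  next
    assume contracted: "(e, TSi) \<in> set (full_run S)"
    then have "e \<in> ?T" by (simp add: tree_of_run_def)
    with run_standard_types(2)[OF contracted] show ?thesis by simp
  qed
  then have same_run: "full_run ?T = full_run S" by (metis run_cong)
  have "?T - ?A \<subseteq> S"
  proof
    fix e assume "e \<in> ?T - ?A"
    then have "(e, TSi) \<in> set (full_run S)" unfolding tree_of_run_def active_def by blast
    then show "e \<in> S" by (rule run_standard_types(2))
  qed
  moreover have "S \<subseteq> ?T \<union> ?A"
  proof
    fix e assume "e \<in> S"
    with assms obtain t where t: "(e, t) \<in> set (full_run S)"
      using full_run_type_exists by blast
    have "t \<noteq> TSe"
      using run_standard_types(1)[of e "card E" V inc E lab S "[]"] t \<open>e \<in> S\<close> by auto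
    with t show "e \<in> ?T \<union> ?A" by (cases t) (auto simp: tree_of_run_def active_def)
  qed
  ultimately show ?thesis
    unfolding mem_tree_interval_iff by (simp add: active_def same_run)
qed

lemma Pow_eq_Union_tree_intervals:
  "Pow E = (\<Union>T\<in>{T. spanning_tree V inc E T}. tree_interval T)"
proof
  show "Pow E \<subseteq> (\<Union>T\<in>{T. spanning_tree V inc E T}. tree_interval T)"
    using spanning_tree_tree_of_full_run mem_tree_interval_tree_of_full_run by blast
  show "(\<Union>T\<in>{T. spanning_tree V inc E T}. tree_interval T) \<subseteq> Pow E"
  proof
    fix S assume "S \<in> (\<Union>T\<in>{T. spanning_tree V inc E T}. tree_interval T)"
    then obtain T where "spanning_tree V inc E T" "S \<in> tree_interval T" by blast
    then show "S \<in> Pow E"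
      using active_subset_edges[of T] by (auto simp: mem_tree_interval_iff spanning_tree_def)
  qed
qed

lemma tree_intervals_disjoint:
  assumes "spanning_tree V inc E T1" and "spanning_tree V inc E T2" and "T1 \<noteq> T2"
  shows "tree_interval T1 \<inter> tree_interval T2 = {}"
proof (rule ccontr)
  assume "tree_interval T1 \<inter> tree_interval T2 \<noteq> {}"
  then obtain S where "S \<in> tree_interval T1" "S \<in> tree_interval T2" by blast
  then have "full_run T1 = full_run T2" using full_run_eq_if_mem_tree_interval by metis
  then have "T1 = T2" using tree_of_full_run_spanning_tree assms(1,2) by metis
  with assms(3) show False ..
qed

end

theorem theorem13p3p1:
  fixes V :: "'v set" and E :: "'e set" and inc :: "'e \<Rightarrow> 'v \<times> 'v" and lab :: "bool list \<Rightarrow> 'e"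
  assumes "is_graph V inc E" and "connected_graph V inc E" and "E \<noteq> {}"
    and "decision_tree E lab"
  shows "Pow E = (\<Union>T\<in>{T. spanning_tree V inc E T}.
            interval (T - internally_active V inc E lab T) (T \<union> externally_active V inc E lab T))
    \<and> (\<forall>T1 T2. spanning_tree V inc E T1 \<longrightarrow> spanning_tree V inc E T2 \<longrightarrow> T1 \<noteq> T2 \<longrightarrow>
           interval (T1 - internally_active V inc E lab T1) (T1 \<union> externally_active V inc E lab T1)
         \<inter> interval (T2 - internally_active V inc E lab T2) (T2 \<union> externally_active V inc E lab T2) = {})"
proof -
  interpret graph_with_decision_tree V inc E lab
    using assms(1,2,4) by unfold_locales
  show ?thesis
    unfolding tree_interval_def[symmetric]
    by (intro conjI allI impI Pow_eq_Union_tree_intervals tree_intervals_disjoint)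
qed

end
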